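(* Let $k\geq0$ and choose one representative $u$ in each orbit $[u]\in[n]^{k+1}/\mathbb{Z}_{k+1}$. Then the set $B=\bigsqcup_{[u]\in[n]^{k+1}/\mathbb{Z}_{k+1}}B_{[u]}$, where \[ B_{[u]}=\{(I-R)e_v=e_v-e_{Rv}\,:\,v\in[u]\setminus\{u\}\}, \] is a basis of $\mathrm{ran}\big((I-R)|_{(\mathbb{C}^n)^{\otimes(k+1)}}\big)$. Consequently, the set $\widetilde B=\bigsqcup_{[u]\in[n]^{k+1}/\mathbb{Z}_{k+1}}\widetilde B_{[u]}$, where \[ \widetilde B_{[u]}=\Big\{\big(\delta_{j,i_1}e_{i_2\cdots i_{k+1}}-2\delta_{j,i_{k+1}}e_{i_1\cdots i_k}+\delta_{j,i_k}e_{i_{k+1}i_1\cdots i_{k-1}}\big)_{1\leq j\leq n}\ :\ i_1i_2\cdots i_{k+1}\in[u]\setminus\{u\}\Big\}, \] is a basis of $\mathcal{X}^{(n)}_k$.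
   Context: Let $\{e_1,\dots,e_n\}$ be an orthonormal basis of $\mathbb{C}^n$. For a word $w=i_1\cdots i_p$ over $[n]=\{1,\dots,n\}$, $e_w=e_{i_1}\otimes\cdots\otimes e_{i_p}\in(\mathbb{C}^n)^{\otimes p}$ (and $e_\epsilon=1$ the vacuum vector of the full Fock space $\mathcal{F}(\mathbb{C}^n)=\mathbb{C}1\oplus\bigoplus_{p\geq1}(\mathbb{C}^n)^{\otimes p}$); $[n]^p$ is the set of words of length $p$. $R$ denotes the cyclic rotation, both on words, $R(i_1\cdots i_{p-1}i_p)=i_pi_1\cdots i_{p-1}$, and on tensors, $R e_{i_1\cdots i_p}=e_{i_pi_1\cdots i_{p-1}}$ (extended linearly); $I$ is the identity. The group $\mathbb{Z}_{k+1}=\mathbb{Z}/(k+1)\mathbb{Z}$ acts on $[n]^{k+1}$ through $R$; $[u]$ is the orbit of $u$ and $[n]^{k+1}/\mathbb{Z}_{k+1}$ the set of orbits. Let $l_je_w=e_{jw}$ and $r_je_w=e_{wj}$ be the left and right creation operators on $\mathcal{F}(\mathbb{C}^n)$. For $k\geq1$, $\mathcal{X}^{(n)}_k=\{((l_j^*-r_j^* )\xi)_{j=1}^n:\xi\in(\mathbb{C}^n)^{\otimes(k+1)}\}\subset[(\mathbb{C}^n)^{\otimes k}]^n$, and $\mathcal{X}^{(n)}_0=\{0\}$. $\delta_{j,i}$ is the Kronecker delta. *)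

theory Defs
  imports Complex_Main "HOL-Library.Function_Algebras"
begin

(* Letters are 1..n; a word is a list; e_w is coordinate vector; tensors of
   degree p are complex functions on words supported on words of length p over [n]. *)

definition words :: "nat \<Rightarrow> nat \<Rightarrow> nat list set" where
  "words n p = {w. length w = p \<and> set w \<subseteq> {1..n}}"

definition rotw :: "nat list \<Rightarrow> nat list" where
  "rotw w = (if w = [] then [] else last w # butlast w)"

definition orbit :: "nat list \<Rightarrow> nat list set" where
  "orbit w = {(rotw ^^ m) w | m. True}"

definition ebas :: "nat list \<Rightarrow> nat list \<Rightarrow> complex" where
  "ebas w = (\<lambda>x. if x = w then 1 else 0)"

definition tens :: "nat \<Rightarrow> nat \<Rightarrow> (nat list \<Rightarrow> complex) set" where
  "tens n p = {f. \<forall>x. f x \<noteq> 0 \<longrightarrow> x \<in> words n p}"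

definition scaleT :: "complex \<Rightarrow> (nat list \<Rightarrow> complex) \<Rightarrow> (nat list \<Rightarrow> complex)" where
  "scaleT c f = (\<lambda>x. c * f x)"

(* R on tensors, linear extension of R e_w = e_{R w}: coordinates (R f)(y) = f (R^{-1} y) *)
definition Rt :: "(nat list \<Rightarrow> complex) \<Rightarrow> (nat list \<Rightarrow> complex)" where
  "Rt f = (\<lambda>y. f (rotate1 y))"

definition ranIR :: "nat \<Rightarrow> nat \<Rightarrow> (nat list \<Rightarrow> complex) set" where
  "ranIR n p = (\<lambda>\<xi>. \<xi> - Rt \<xi>) ` tens n p"

(* adjoints of the creation operators: l_j^* e_{jw} = e_w, r_j^* e_{wj} = e_w, else 0 *)
definition lstar :: "nat \<Rightarrow> (nat list \<Rightarrow> complex) \<Rightarrow> (nat list \<Rightarrow> complex)" where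
  "lstar j f = (\<lambda>x. f (j # x))"

definition rstar :: "nat \<Rightarrow> (nat list \<Rightarrow> complex) \<Rightarrow> (nat list \<Rightarrow> complex)" where
  "rstar j f = (\<lambda>x. f (x @ [j]))"

(* elements of [(C^n)^{\<otimes> k}]^n are families indexed by j \<in> {1..n} (zero outside) *)
definition scaleV :: "complex \<Rightarrow> (nat \<Rightarrow> nat list \<Rightarrow> complex) \<Rightarrow> (nat \<Rightarrow> nat list \<Rightarrow> complex)" where
  "scaleV c F = (\<lambda>j x. c * F j x)"

definition Xspace :: "nat \<Rightarrow> nat \<Rightarrow> (nat \<Rightarrow> nat list \<Rightarrow> complex) set" where
  "Xspace n k = (if k = 0 then {0} else
     {(\<lambda>j. if j \<in> {1..n} then lstar j \<xi> - rstar j \<xi> else 0) | \<xi>. \<xi> \<in> tens n (k + 1)})"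

definition Bvec :: "nat list \<Rightarrow> nat list \<Rightarrow> complex" where
  "Bvec v = ebas v - ebas (rotw v)"

(* element of tilde B_[u] attached to v = i_1 ... i_{k+1}  (i_m = v ! (m-1)) *)
definition Btil :: "nat \<Rightarrow> nat list \<Rightarrow> nat \<Rightarrow> nat list \<Rightarrow> complex" where
  "Btil k v = (\<lambda>j x.
      (if j = v ! 0 then ebas (drop 1 v) x else 0)
      - 2 * (if j = v ! k then ebas (take k v) x else 0)
      + (if j = v ! (k - 1) then ebas ((v ! k) # take (k - 1) v) x else 0))"

definition basis_family :: "(complex \<Rightarrow> 'b \<Rightarrow> 'b::ab_group_add) \<Rightarrow> 'i set \<Rightarrow> ('i \<Rightarrow> 'b) \<Rightarrow> 'b set \<Rightarrow> bool" where
  "basis_family s I f V \<longleftrightarrow>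
     inj_on f I \<and> \<not> module.dependent s (f ` I) \<and> module.span s (f ` I) = V"

end

theory Submission
  imports Defs
begin

text \<open>
  A rotation-invariant function vanishing at all orbit representatives is zero, and
  (I - R) xi = (I - R) (xi - xi o rep) since xi o rep is rotation-invariant. Hence I - R maps the
  functions supported on the non-representative words bijectively onto ran (I - R), and B is the
  image of their standard basis.

  On words l_j^* - r_j^* = l_j^* (I - R), and xi |-> (l_j^* xi)_j is injective on tensors of
  positive degree; so X_k is the injective image of ran (I - R) under this map, and tilde-B is the
  image of (I - R) B. As R^(k+1) = I, averaging over the rotations splits the tensors into
  ker (I - R) and ran (I - R) with trivial intersection, so I - R restricts to a bijection of
  ran (I - R) and carries the basis B to another basis of it.
\<close>

section \<open>Bases and module homomorphisms\<close>

lemma sum_fun_apply: "(\<Sum>a\<in>A. f a) x = (\<Sum>a\<in>A. f a x)"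
  by (induct A rule: infinite_finite_induct) auto

lemma module_scaleT: "module scaleT"
  by unfold_locales (auto simp: scaleT_def fun_eq_iff algebra_simps)

lemma module_scaleV: "module scaleV"
  by unfold_locales (auto simp: scaleV_def fun_eq_iff algebra_simps)

lemma basis_family_cong:
  assumes "\<And>i. i \<in> I \<Longrightarrow> f i = g i"
  shows "basis_family s I f V \<longleftrightarrow> basis_family s I g V"
  using assms by (simp add: basis_family_def cong: image_cong inj_on_cong)

lemma basis_family_empty: "module s \<Longrightarrow> basis_family s {} f {0}"
  by (simp add: basis_family_def module.span_empty module.independent_empty)

lemma basis_family_image:
  assumes h: "module_hom s1 s2 h" and B: "basis_family s1 I f V" and inj: "inj_on h V"
  shows "basis_family s2 I (h \<circ> f) (h ` V)"
proof -
  interpret module_hom s1 s2 h by (fact h)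
  have inj_f: "inj_on f I" and indep: "m1.independent (f ` I)" and span: "m1.span (f ` I) = V"
    using B by (auto simp: basis_family_def)
  have "f ` I \<subseteq> V"
    using span m1.span_superset by blast
  then have "inj_on (h \<circ> f) I"
    using inj_f inj by (blast intro: comp_inj_on inj_on_subset)
  moreover have "m2.independent (h ` f ` I)"
    using indep inj span by (intro independent_injective_image) auto
  moreover have "m2.span (h ` f ` I) = h ` V"
    by (simp add: span_image span)
  ultimately show ?thesis
    by (simp add: basis_family_def image_comp)
qed

section \<open>Tensors and rotations\<close>

definition supported_on :: "nat list set \<Rightarrow> (nat list \<Rightarrow> complex) set" where
  "supported_on J = {c. \<forall>x. c x \<noteq> 0 \<longrightarrow> x \<in> J}"

lemma tens_eq_supported_on: "tens n p = supported_on (words n p)"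
  by (simp add: tens_def supported_on_def)

lemma supported_on_mono: "J \<subseteq> K \<Longrightarrow> supported_on J \<subseteq> supported_on K"
  by (auto simp: supported_on_def)

lemma subspace_supported_on: "module.subspace scaleT (supported_on J)"
  by (auto simp: module.subspace_def[OF module_scaleT] supported_on_def scaleT_def)
    (metis add.right_neutral)

lemma supported_on_eq_sum_ebas:
  assumes "finite J" "c \<in> supported_on J"
  shows "c = (\<Sum>v\<in>J. scaleT (c v) (ebas v))"
proof
  fix x
  have "(\<Sum>v\<in>J. scaleT (c v) (ebas v)) x = (\<Sum>v\<in>J. if x = v then c x else 0)"
    unfolding sum_fun_apply by (intro sum.cong) (auto simp: scaleT_def ebas_def)
  also have "\<dots> = c x"
    using assms by (auto simp: supported_on_def)
  finally show "c x = (\<Sum>v\<in>J. scaleT (c v) (ebas v)) x" ..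
qed

lemma basis_family_ebas:
  assumes "finite J"
  shows "basis_family scaleT J ebas (supported_on J)"
proof -
  interpret module scaleT by (fact module_scaleT)
  have inj: "inj_on ebas J"
    by (rule inj_onI) (metis ebas_def zero_neq_one)
  have "independent (ebas ` J)"
    unfolding independent_explicit_module
  proof (intro allI impI)
    fix t u b
    assume t: "finite t" "t \<subseteq> ebas ` J" and sum0: "(\<Sum>b\<in>t. scaleT (u b) b) = 0" and "b \<in> t"
    then obtain w where w: "b = ebas w" by blast
    have eval: "b' w = (if b' = b then 1 else 0)" if b': "b' \<in> t" for b'
    proof -
      obtain w' where "b' = ebas w'"
        using b' t by blast
      then show ?thesis
        by (auto simp: w ebas_def fun_eq_iff)
    qed
    then have "(\<Sum>b\<in>t. scaleT (u b) b) w = (\<Sum>b'\<in>t. if b' = b then u b else 0)"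
      unfolding sum_fun_apply by (intro sum.cong) (simp_all add: scaleT_def eval)
    then show "u b = 0"
      using sum0 t \<open>b \<in> t\<close> by simp
  qed
  moreover have "span (ebas ` J) = supported_on J"
  proof
    show "span (ebas ` J) \<subseteq> supported_on J"
      by (intro span_minimal subspace_supported_on) (auto simp: supported_on_def ebas_def split: if_splits)
    show "supported_on J \<subseteq> span (ebas ` J)"
    proof
      fix c assume "c \<in> supported_on J"
      with assms have "c = (\<Sum>v\<in>J. scaleT (c v) (ebas v))"
        by (rule supported_on_eq_sum_ebas)
      also have "\<dots> \<in> span (ebas ` J)"
        by (intro span_sum span_scale span_base) auto
      finally show "c \<in> span (ebas ` J)" .
    qed
  qed
  ultimately show ?thesis
    using inj by (simp add: basis_family_def)
qed

lemma finite_words: "finite (words n p)"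
  using finite_lists_length_eq[of "{1..n}" p] by (simp add: words_def conj_commute)

lemma words_rotate_iff [simp]: "rotate m x \<in> words n p \<longleftrightarrow> x \<in> words n p"
  by (simp add: words_def)

lemma words_rotate1_iff [simp]: "rotate1 x \<in> words n p \<longleftrightarrow> x \<in> words n p"
  by (simp add: words_def)

lemma tens_vanishes: "\<xi> \<in> tens n p \<Longrightarrow> x \<notin> words n p \<Longrightarrow> \<xi> x = 0"
  by (auto simp: tens_def)

lemma tens_rotate_length: "\<xi> \<in> tens n p \<Longrightarrow> \<xi> (rotate p y) = \<xi> y"
  by (cases "length y = p") (auto simp: words_def tens_vanishes)

lemma rotate1_rotw [simp]: "rotate1 (rotw x) = x"
  by (cases x rule: rev_cases) (auto simp: rotw_def)

lemma rotw_rotate1 [simp]: "rotw (rotate1 x) = x"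
  by (cases x) (auto simp: rotw_def)

lemma rotw_snoc: "rotw (w @ [a]) = a # w"
  by (simp add: rotw_def)

lemma orbit_rotation_invariant:
  assumes inv: "\<And>x. c (rotate1 x) = c x" and "v \<in> orbit w"
  shows "c v = c w"
proof -
  have "c (rotw y) = c y" for y
    using inv[of "rotw y"] by simp
  then have "c ((rotw ^^ m) w) = c w" for m
    by (induct m) simp_all
  then show ?thesis
    using \<open>v \<in> orbit w\<close> by (auto simp: orbit_def)
qed

section \<open>The operator I - R\<close>

definition IR :: "(nat list \<Rightarrow> complex) \<Rightarrow> nat list \<Rightarrow> complex" where
  "IR \<xi> = \<xi> - Rt \<xi>"

lemma IR_apply: "IR \<xi> x = \<xi> x - \<xi> (rotate1 x)"
  by (simp add: IR_def Rt_def)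

lemma ranIR_eq: "ranIR n p = IR ` tens n p"
  by (simp add: ranIR_def IR_def[abs_def])

lemma module_hom_IR: "module_hom scaleT scaleT IR"
  by (intro module_hom.intro module_scaleT)
    (auto simp: module_hom_axioms_def fun_eq_iff IR_apply scaleT_def algebra_simps)

lemma IR_eq_0_iff: "IR \<xi> = 0 \<longleftrightarrow> (\<forall>x. \<xi> (rotate1 x) = \<xi> x)"
  by (auto simp: fun_eq_iff IR_apply)

lemma Bvec_eq_IR_ebas: "Bvec v = IR (ebas v)"
  by (auto simp: fun_eq_iff Bvec_def IR_apply ebas_def)

lemma IR_tens: "\<xi> \<in> tens n p \<Longrightarrow> IR \<xi> \<in> tens n p"
  by (auto simp: tens_def IR_apply) (metis words_rotate1_iff)

lemma ranIR_subset_tens: "ranIR n p \<subseteq> tens n p"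
  by (auto simp: ranIR_eq IR_tens)

lemma subspace_ranIR: "module.subspace scaleT (ranIR n p)"
  unfolding ranIR_eq tens_eq_supported_on
  by (rule module_hom.subspace_image[OF module_hom_IR subspace_supported_on])

lemma IR_sum_rotate: "(\<Sum>m<N. IR \<xi> (rotate m y)) = \<xi> y - \<xi> (rotate N y)"
  using sum_lessThan_telescope'[of "\<lambda>m. \<xi> (rotate m y)" N] by (simp add: IR_apply)

lemma ranIR_rotation_invariant_eq_0:
  assumes "g \<in> ranIR n p" "0 < p" and inv: "\<And>x. g (rotate1 x) = g x"
  shows "g = 0"
proof
  fix y
  obtain \<xi> where \<xi>: "\<xi> \<in> tens n p" "g = IR \<xi>"
    using assms(1) by (auto simp: ranIR_eq)
  have "g (rotate m y) = g y" for m
    by (induct m) (simp_all add: inv)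
  then have "of_nat p * g y = (\<Sum>m<p. g (rotate m y))"
    by simp
  also have "\<dots> = 0"
    using \<xi> by (simp add: IR_sum_rotate tens_rotate_length)
  finally show "g y = 0 y"
    using assms(2) by simp
qed

lemma sum_rotate_rotate1:
  assumes "\<xi> \<in> tens n p"
  shows "(\<Sum>m<p. \<xi> (rotate m (rotate1 y))) = (\<Sum>m<p. \<xi> (rotate m y))"
proof -
  have "(\<Sum>m<p. \<xi> (rotate m (rotate1 y))) = (\<Sum>m<p. \<xi> (rotate (Suc m) y))"
    by (simp add: rotate1_rotate_swap)
  also have "\<dots> = (\<Sum>m<Suc p. \<xi> (rotate m y)) - \<xi> y"
    by (simp only: sum.lessThan_Suc_shift) simp
  also have "\<dots> = (\<Sum>m<p. \<xi> (rotate m y))"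
    using tens_rotate_length[OF assms, of y] by simp
  finally show ?thesis .
qed

lemma IR_sum_partial_rotations:
  "IR (\<lambda>y. \<Sum>m<N. \<Sum>i<m. \<xi> (rotate i y)) y = of_nat N * \<xi> y - (\<Sum>m<N. \<xi> (rotate m y))"
proof -
  have "IR (\<lambda>y. \<Sum>m<N. \<Sum>i<m. \<xi> (rotate i y)) y = (\<Sum>m<N. \<Sum>i<m. IR \<xi> (rotate i y))"
    by (simp add: IR_apply sum_subtractf rotate1_rotate_swap)
  also have "\<dots> = (\<Sum>m<N. \<xi> y - \<xi> (rotate m y))"
    by (simp only: IR_sum_rotate)
  finally show ?thesis
    by (simp add: sum_subtractf)
qed

lemma tens_decomp_invariant_plus_ranIR:
  assumes \<xi>: "\<xi> \<in> tens n p" and "0 < p"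
  obtains a \<eta> where "\<And>x. a (rotate1 x) = a x" "\<eta> \<in> tens n p" "\<xi> = a + IR \<eta>"
proof
  define a where "a y = (\<Sum>m<p. \<xi> (rotate m y)) / of_nat p" for y
  define \<eta> where "\<eta> y = (\<Sum>m<p. \<Sum>i<m. \<xi> (rotate i y)) / of_nat p" for y
  show "a (rotate1 x) = a x" for x
    using sum_rotate_rotate1[OF \<xi>] by (simp add: a_def)
  have "\<eta> y = 0" if "y \<notin> words n p" for y
    using that tens_vanishes[OF \<xi>] by (simp add: \<eta>_def)
  then show "\<eta> \<in> tens n p"
    by (auto simp: tens_def)
  have "IR \<eta> y = \<xi> y - a y" for y
  proof -
    have "IR \<eta> y = IR (\<lambda>y. \<Sum>m<p. \<Sum>i<m. \<xi> (rotate i y)) y / of_nat p"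
      by (simp add: IR_apply \<eta>_def diff_divide_distrib)
    then show ?thesis
      using \<open>0 < p\<close> by (simp add: IR_sum_partial_rotations a_def diff_divide_distrib)
  qed
  then show "\<xi> = a + IR \<eta>"
    by (simp add: fun_eq_iff)
qed

lemma inj_on_IR_ranIR:
  assumes "0 < p"
  shows "inj_on IR (ranIR n p)"
  using ranIR_rotation_invariant_eq_0[OF _ assms]
  by (auto simp: module_hom.inj_on_iff_eq_0[OF module_hom_IR subspace_ranIR] IR_eq_0_iff)

lemma IR_image_ranIR:
  assumes "0 < p"
  shows "IR ` ranIR n p = ranIR n p"
proof
  show "IR ` ranIR n p \<subseteq> ranIR n p"
    by (auto simp: ranIR_eq intro!: imageI IR_tens)
  show "ranIR n p \<subseteq> IR ` ranIR n p"
  proof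
    fix g assume "g \<in> ranIR n p"
    then obtain \<xi> where \<xi>: "\<xi> \<in> tens n p" "g = IR \<xi>"
      by (auto simp: ranIR_eq)
    then obtain a \<eta> where a: "\<And>x. a (rotate1 x) = a x" and "\<eta> \<in> tens n p" "\<xi> = a + IR \<eta>"
      using assms by (blast elim: tens_decomp_invariant_plus_ranIR)
    moreover have "IR a = 0"
      using a by (simp add: IR_eq_0_iff)
    ultimately have "g = IR (IR \<eta>)"
      using \<xi> module_hom.add[OF module_hom_IR] by simp
    then show "g \<in> IR ` ranIR n p"
      using \<open>\<eta> \<in> tens n p\<close> by (auto simp: ranIR_eq)
  qed
qed

section \<open>The operators l_j^* - r_j^*\<close>

definition lstars :: "nat \<Rightarrow> (nat list \<Rightarrow> complex) \<Rightarrow> nat \<Rightarrow> nat list \<Rightarrow> complex" where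
  "lstars n \<xi> = (\<lambda>j. if j \<in> {1..n} then lstar j \<xi> else 0)"

lemma lstar_IR: "lstar j (IR \<xi>) = lstar j \<xi> - rstar j \<xi>"
  by (simp add: fun_eq_iff lstar_def rstar_def IR_apply)

lemma Xspace_eq_lstars_image: "0 < k \<Longrightarrow> Xspace n k = lstars n ` ranIR n (k + 1)"
  by (simp add: Xspace_def Setcompr_eq_image ranIR_eq image_image lstars_def lstar_IR cong: if_cong)

lemma module_hom_lstars: "module_hom scaleT scaleV (lstars n)"
  by (intro module_hom.intro module_scaleT module_scaleV)
    (auto simp: module_hom_axioms_def fun_eq_iff lstars_def lstar_def scaleT_def scaleV_def)

lemma inj_on_lstars_tens:
  assumes "0 < p"
  shows "inj_on (lstars n) (tens n p)"
proof -
  have "\<xi> = 0" if \<xi>: "\<xi> \<in> tens n p" and "lstars n \<xi> = 0" for \<xi>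
  proof
    fix x
    show "\<xi> x = 0 x"
    proof (cases "x \<in> words n p")
      case True
      with assms obtain j y where "x = j # y" "j \<in> {1..n}"
        by (cases x) (auto simp: words_def)
      then show ?thesis
        using fun_cong[OF fun_cong[OF \<open>lstars n \<xi> = 0\<close>, of j], of y] by (simp add: lstars_def lstar_def)
    qed (simp add: tens_vanishes[OF \<xi>])
  qed
  then show ?thesis
    by (simp add: module_hom.inj_on_iff_eq_0[OF module_hom_lstars] tens_eq_supported_on subspace_supported_on)
qed

lemma lstar_ebas_Cons: "lstar j (ebas (a # w)) = (if j = a then ebas w else 0)"
  by (auto simp: fun_eq_iff lstar_def ebas_def)

lemma rstar_ebas_snoc: "rstar j (ebas (w @ [a])) = (if j = a then ebas w else 0)"
  by (auto simp: fun_eq_iff rstar_def ebas_def)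

lemma lstars_IR_Bvec:
  assumes "0 < k" and v: "v \<in> words n (k + 1)"
  shows "lstars n (IR (Bvec v)) = Btil k v"
proof -
  have len: "length v = Suc k" and letters: "set v \<subseteq> {1..n}"
    using v by (auto simp: words_def)
  have v_Cons: "v = v ! 0 # drop 1 v"
    using len by (simp add: Cons_nth_drop_Suc)
  have v_snoc: "v = take k v @ [v ! k]"
    using len take_Suc_conv_app_nth[of k v] by simp
  have take_snoc: "take k v = take (k - 1) v @ [v ! (k - 1)]"
    using len \<open>0 < k\<close> take_Suc_conv_app_nth[of "k - 1" v] by simp
  have rotw_v: "rotw v = v ! k # take k v"
    by (subst v_snoc) (simp add: rotw_snoc)
  have component: "lstar j (IR (Bvec v)) = Btil k v j" for j
  proof -
    have "lstar j (IR (Bvec v))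
        = (lstar j (ebas v) - rstar j (ebas v)) - (lstar j (ebas (rotw v)) - rstar j (ebas (rotw v)))"
      by (simp add: fun_eq_iff lstar_def rstar_def IR_apply Bvec_def)
    moreover have "lstar j (ebas v) = (if j = v ! 0 then ebas (drop 1 v) else 0)"
      using lstar_ebas_Cons[of j "v ! 0" "drop 1 v"] v_Cons by simp
    moreover have "rstar j (ebas v) = (if j = v ! k then ebas (take k v) else 0)"
      using rstar_ebas_snoc[of j "take k v" "v ! k"] v_snoc by simp
    moreover have "lstar j (ebas (rotw v)) = (if j = v ! k then ebas (take k v) else 0)"
      by (simp add: rotw_v lstar_ebas_Cons)
    moreover have "rstar j (ebas (rotw v)) = (if j = v ! (k - 1) then ebas (v ! k # take (k - 1) v) else 0)"
      using rstar_ebas_snoc[of j "v ! k # take (k - 1) v" "v ! (k - 1)"] by (simp add: rotw_v take_snoc)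
    ultimately show ?thesis
      by (simp add: Btil_def fun_eq_iff)
  qed
  have "v ! i \<in> {1..n}" if "i \<le> k" for i
    using letters len that by (metis le_imp_less_Suc nth_mem subset_iff)
  then have "v ! 0 \<in> {1..n}" "v ! k \<in> {1..n}" "v ! (k - 1) \<in> {1..n}"
    by simp_all
  then show ?thesis
    by (auto simp: fun_eq_iff lstars_def component Btil_def)
qed

section \<open>Orbit representatives\<close>

locale orbit_representatives =
  fixes n p :: nat and rep :: "nat list \<Rightarrow> nat list"
  assumes rep_in: "\<forall>w \<in> words n p. rep w \<in> orbit w"
    and rep_const: "\<forall>w \<in> words n p. \<forall>v \<in> orbit w. rep v = rep w"
begin

abbreviation nonreps :: "nat list set" where
  "nonreps \<equiv> {v \<in> words n p. v \<noteq> rep v}"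

lemma finite_nonreps: "finite nonreps"
  using finite_words by simp

lemma rep_rep: "w \<in> words n p \<Longrightarrow> rep (rep w) = rep w"
  using rep_in rep_const by blast

lemma rep_rotate1:
  assumes "w \<in> words n p"
  shows "rep (rotate1 w) = rep w"
proof -
  have "w \<in> orbit (rotate1 w)"
    unfolding orbit_def by (auto intro: exI[of _ 1])
  then show ?thesis
    using rep_const assms by (metis words_rotate1_iff)
qed

lemma rotation_invariant_supported_nonreps_eq_0:
  assumes c: "c \<in> supported_on nonreps" and inv: "\<And>x. c (rotate1 x) = c x"
  shows "c = 0"
proof
  fix x
  show "c x = 0 x"
  proof (cases "x \<in> words n p")
    case True
    then have "c x = c (rep x)"
      using orbit_rotation_invariant[of c, OF inv] rep_in by metis
    also have "c (rep x) = 0"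
      using c rep_rep[OF True] by (auto simp: supported_on_def)
    finally show ?thesis by simp
  qed (use c in \<open>auto simp: supported_on_def\<close>)
qed

lemma IR_image_supported_nonreps: "IR ` supported_on nonreps = ranIR n p"
proof
  show "IR ` supported_on nonreps \<subseteq> ranIR n p"
    unfolding ranIR_eq tens_eq_supported_on by (intro image_mono supported_on_mono) auto
  show "ranIR n p \<subseteq> IR ` supported_on nonreps"
  proof
    fix g assume "g \<in> ranIR n p"
    then obtain \<xi> where \<xi>: "\<xi> \<in> tens n p" "g = IR \<xi>"
      by (auto simp: ranIR_eq)
    define c where "c x = (if x \<in> words n p then \<xi> x - \<xi> (rep x) else 0)" for x
    have "c \<in> supported_on nonreps"
      by (auto simp: c_def supported_on_def)
    moreover have "IR c = g"
      using \<xi> by (auto simp: fun_eq_iff IR_apply c_def rep_rotate1 tens_vanishes)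
    ultimately show "g \<in> IR ` supported_on nonreps"
      by blast
  qed
qed

lemma inj_on_IR_supported_nonreps: "inj_on IR (supported_on nonreps)"
  using rotation_invariant_supported_nonreps_eq_0
  by (auto simp: module_hom.inj_on_iff_eq_0[OF module_hom_IR subspace_supported_on] IR_eq_0_iff)

theorem basis_family_Bvec: "basis_family scaleT nonreps Bvec (ranIR n p)"
proof -
  have "Bvec = IR \<circ> ebas"
    by (simp add: fun_eq_iff Bvec_eq_IR_ebas)
  with basis_family_image[OF module_hom_IR basis_family_ebas[OF finite_nonreps]
      inj_on_IR_supported_nonreps]
  show ?thesis
    by (simp add: IR_image_supported_nonreps)
qed

lemma nonreps_empty_if_length_one:
  assumes "p = 1"
  shows "nonreps = {}"
proof -
  have "rep v = v" if "v \<in> words n p" for v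
  proof -
    from that assms obtain a where "v = [a]"
      by (auto simp: words_def length_Suc_conv)
    then have "(rotw ^^ m) v = v" for m
      by (induct m) (simp_all add: rotw_def)
    then show ?thesis
      using rep_in that by (auto simp: orbit_def)
  qed
  then show ?thesis
    by auto
qed

theorem basis_family_Btil:
  assumes "p = k + 1"
  shows "basis_family scaleV nonreps (Btil k) (Xspace n k)"
proof (cases "k = 0")
  case True
  then have "nonreps = {}"
    using assms by (intro nonreps_empty_if_length_one) simp
  moreover have "Xspace n k = {0}"
    using True by (simp add: Xspace_def)
  ultimately show ?thesis
    by (metis basis_family_empty[OF module_scaleV])
next
  case False
  then have "0 < k" "0 < p"
    using assms by simp_all
  let ?h = "lstars n \<circ> IR"
  have "inj_on ?h (ranIR n p)"
  proof (rule comp_inj_on)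
    show "inj_on IR (ranIR n p)"
      by (rule inj_on_IR_ranIR[OF \<open>0 < p\<close>])
    show "inj_on (lstars n) (IR ` ranIR n p)"
      unfolding IR_image_ranIR[OF \<open>0 < p\<close>]
      by (rule inj_on_subset[OF inj_on_lstars_tens[OF \<open>0 < p\<close>] ranIR_subset_tens])
  qed
  then have "basis_family scaleV nonreps (?h \<circ> Bvec) (?h ` ranIR n p)"
    by (intro basis_family_image[OF module_hom_compose[OF module_hom_IR module_hom_lstars]
          basis_family_Bvec])
  moreover have "?h ` ranIR n p = Xspace n k"
  proof -
    have "?h ` ranIR n p = lstars n ` IR ` ranIR n p"
      by (simp add: image_comp)
    also have "\<dots> = lstars n ` ranIR n p"
      by (simp only: IR_image_ranIR[OF \<open>0 < p\<close>])
    also have "\<dots> = Xspace n k"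
      using Xspace_eq_lstars_image[OF \<open>0 < k\<close>] assms by simp
    finally show ?thesis .
  qed
  moreover have "(?h \<circ> Bvec) v = Btil k v" if "v \<in> nonreps" for v
    using lstars_IR_Bvec[OF \<open>0 < k\<close>] that assms by simp
  ultimately show ?thesis
    using basis_family_cong[of nonreps "?h \<circ> Bvec" "Btil k"] by simp
qed

end

theorem proposition3p7:
  fixes n k :: nat and rep :: "nat list \<Rightarrow> nat list"
  assumes rep_in: "\<forall>w \<in> words n (k + 1). rep w \<in> orbit w"
    and rep_const: "\<forall>w \<in> words n (k + 1). \<forall>v \<in> orbit w. rep v = rep w"
  shows "basis_family scaleT {v \<in> words n (k + 1). v \<noteq> rep v} Bvec (ranIR n (k + 1))
       \<and> basis_family scaleV {v \<in> words n (k + 1). v \<noteq> rep v} (Btil k) (Xspace n k)"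
proof -
  interpret orbit_representatives n "k + 1" rep
    using rep_in rep_const by unfold_locales
  show ?thesis
    using basis_family_Bvec basis_family_Btil by simp
qed

end
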